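(* Let $G$ be a Borel groupoid. If there is a proper Borel $G$-space $X$ such that the moment map $r_X:X\to G^{(0)}$ is Borel amenable ($G$-amenable), then $G$ is Borel amenable.
   Context: All Borel spaces are analytic. A Borel $G$-space $X$ has a Borel moment map $r_X:X\to G^{(0)}$ and Borel action $\gamma\cdot x$ defined when $s(\gamma)=r_X(x)$; $G$ acts on $G^{(0)}$ by $\gamma\cdot s(\gamma)=r(\gamma)$. For a Borel surjection $\pi:X\to Y$, a $\pi$-system is a family $\{m^y\}$ of measures with $m^y$ supported in $\pi^{-1}(y)$ and $y\mapsto\int f\,dm^y$ Borel for all nonnegative Borel $f$. A surjective Borel $G$-map $\pi$ is $G$-properly amenable if there is a $\pi$-system of probability measures with $\gamma\cdot m^y=m^{\gamma\cdot y}$, and $G$-amenable if there is a sequence of $\pi$-systems $m_n$ of probability measures with $\|\gamma\cdot m_n^y-m_n^{\gamma\cdot y}\|_1\to0$ for all composable $\gamma,y$ (total variation norm; $(\gamma\cdot m)(E)=m(\gamma^{-1}E)$). $X$ is a proper $G$-space if the projection $X*G\to X$, $X*G=\{(x,\gamma):r_X(x)=r(\gamma)\}$ with diagonal action, is $G$-properly amenable. $G$ is Borel amenable if $r:G\to G^{(0)}$ is $G$-amenable. *)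

theory Defs
  imports "HOL-Probability.Probability"
begin

definition analytic_set :: "real set \<Rightarrow> bool" where
  "analytic_set A \<longleftrightarrow> A = {} \<or> (\<exists>f :: (nat \<Rightarrow> nat) \<Rightarrow> real. continuous_on UNIV f \<and> range f = A)"

text \<open>A Borel space is analytic if it is Borel isomorphic to an analytic subset of a
  Polish space (here w.l.o.g. the reals) with the relative Borel structure.\<close>
definition analytic_space :: "'a measure \<Rightarrow> bool" where
  "analytic_space M \<longleftrightarrow> (\<exists>(f :: 'a \<Rightarrow> real) A. analytic_set A \<and> bij_betw f (space M) A \<and>
      f \<in> measurable M (restrict_space borel A) \<and>
      (\<forall>B\<in>sets M. f ` B \<in> sets (restrict_space borel A)))"

record 'g groupoid =
  arrows :: "'g measure"
  rng :: "'g \<Rightarrow> 'g"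
  src :: "'g \<Rightarrow> 'g"
  comp :: "'g \<Rightarrow> 'g \<Rightarrow> 'g"
  ginv :: "'g \<Rightarrow> 'g"

definition units :: "'g groupoid \<Rightarrow> 'g set" where
  "units G = rng G ` space (arrows G)"

definition unit_space :: "'g groupoid \<Rightarrow> 'g measure" where
  "unit_space G = restrict_space (arrows G) (units G)"

definition composable_pairs :: "'g groupoid \<Rightarrow> ('g \<times> 'g) measure" where
  "composable_pairs G = restrict_space (arrows G \<Otimes>\<^sub>M arrows G)
     {(a, b). a \<in> space (arrows G) \<and> b \<in> space (arrows G) \<and> src G a = rng G b}"

definition groupoid :: "'g groupoid \<Rightarrow> bool" where
  "groupoid G \<longleftrightarrow>
    (let S = space (arrows G) in
     (\<forall>u\<in>units G. u \<in> S \<and> rng G u = u \<and> src G u = u) \<and>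
     (\<forall>a\<in>S. src G a \<in> units G) \<and>
     (\<forall>a\<in>S. \<forall>b\<in>S. src G a = rng G b \<longrightarrow>
        comp G a b \<in> S \<and> rng G (comp G a b) = rng G a \<and> src G (comp G a b) = src G b) \<and>
     (\<forall>a\<in>S. \<forall>b\<in>S. \<forall>c\<in>S. src G a = rng G b \<longrightarrow> src G b = rng G c \<longrightarrow>
        comp G (comp G a b) c = comp G a (comp G b c)) \<and>
     (\<forall>a\<in>S. comp G (rng G a) a = a \<and> comp G a (src G a) = a) \<and>
     (\<forall>a\<in>S. ginv G a \<in> S \<and> rng G (ginv G a) = src G a \<and> src G (ginv G a) = rng G a \<and>
        comp G a (ginv G a) = rng G a \<and> comp G (ginv G a) a = src G a))"

definition borel_groupoid :: "'g groupoid \<Rightarrow> bool" where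
  "borel_groupoid G \<longleftrightarrow> groupoid G \<and> analytic_space (arrows G) \<and>
     rng G \<in> measurable (arrows G) (arrows G) \<and>
     src G \<in> measurable (arrows G) (arrows G) \<and>
     ginv G \<in> measurable (arrows G) (arrows G) \<and>
     (\<lambda>(a, b). comp G a b) \<in> measurable (composable_pairs G) (arrows G)"

text \<open>X with moment map rX and action act (act g x defined when src g = rX x).\<close>
definition G_space :: "'g groupoid \<Rightarrow> 'x measure \<Rightarrow> ('x \<Rightarrow> 'g) \<Rightarrow> ('g \<Rightarrow> 'x \<Rightarrow> 'x) \<Rightarrow> bool" where
  "G_space G X rX act \<longleftrightarrow> analytic_space X \<and>
     rX \<in> measurable X (unit_space G) \<and>
     (\<forall>x\<in>space X. act (rX x) x = x) \<and>
     (\<forall>g\<in>space (arrows G). \<forall>x\<in>space X. src G g = rX x \<longrightarrow>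
        act g x \<in> space X \<and> rX (act g x) = rng G g) \<and>
     (\<forall>a\<in>space (arrows G). \<forall>b\<in>space (arrows G). \<forall>x\<in>space X.
        src G a = rng G b \<longrightarrow> src G b = rX x \<longrightarrow> act (comp G a b) x = act a (act b x)) \<and>
     (\<lambda>(g, x). act g x) \<in> measurable
        (restrict_space (arrows G \<Otimes>\<^sub>M X)
           {(g, x). g \<in> space (arrows G) \<and> x \<in> space X \<and> src G g = rX x}) X"

definition G_map :: "'g groupoid \<Rightarrow> 'x measure \<Rightarrow> ('x \<Rightarrow> 'g) \<Rightarrow> ('g \<Rightarrow> 'x \<Rightarrow> 'x) \<Rightarrow>
    'y measure \<Rightarrow> ('y \<Rightarrow> 'g) \<Rightarrow> ('g \<Rightarrow> 'y \<Rightarrow> 'y) \<Rightarrow> ('x \<Rightarrow> 'y) \<Rightarrow> bool" where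
  "G_map G X rX actX Y rY actY \<pi> \<longleftrightarrow> G_space G X rX actX \<and> G_space G Y rY actY \<and>
     \<pi> \<in> measurable X Y \<and>
     (\<forall>x\<in>space X. rY (\<pi> x) = rX x) \<and>
     (\<forall>g\<in>space (arrows G). \<forall>x\<in>space X. src G g = rX x \<longrightarrow> \<pi> (actX g x) = actY g (\<pi> x))"

definition pi_sys :: "'x measure \<Rightarrow> 'y measure \<Rightarrow> ('x \<Rightarrow> 'y) \<Rightarrow> ('y \<Rightarrow> 'x measure) \<Rightarrow> bool" where
  "pi_sys X Y \<pi> m \<longleftrightarrow>
     (\<forall>y\<in>space Y. sets (m y) = sets X \<and>
        (\<exists>A\<in>sets X. A \<subseteq> \<pi> -` {y} \<and> emeasure (m y) (space X - A) = 0)) \<and>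
     (\<forall>f\<in>borel_measurable X. (\<lambda>y. \<integral>\<^sup>+ x. f x \<partial>m y) \<in> borel_measurable Y)"

definition gact_measure :: "'g groupoid \<Rightarrow> 'x measure \<Rightarrow> ('x \<Rightarrow> 'g) \<Rightarrow> ('g \<Rightarrow> 'x \<Rightarrow> 'x) \<Rightarrow>
    'g \<Rightarrow> 'x measure \<Rightarrow> 'x measure" where
  "gact_measure G X rX act g m = measure_of (space X) (sets X)
     (\<lambda>E. emeasure m {x \<in> space X. rX x = src G g \<and> act g x \<in> E})"

definition tv_norm :: "'x measure \<Rightarrow> 'x measure \<Rightarrow> real" where
  "tv_norm \<mu> \<nu> = (SUP P \<in> {P. finite P \<and> P \<subseteq> sets \<mu> \<and> disjoint P}.
       \<Sum>A\<in>P. \<bar>measure \<mu> A - measure \<nu> A\<bar>)"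

definition properly_amenable :: "'g groupoid \<Rightarrow> 'x measure \<Rightarrow> ('x \<Rightarrow> 'g) \<Rightarrow> ('g \<Rightarrow> 'x \<Rightarrow> 'x) \<Rightarrow>
    'y measure \<Rightarrow> ('y \<Rightarrow> 'g) \<Rightarrow> ('g \<Rightarrow> 'y \<Rightarrow> 'y) \<Rightarrow> ('x \<Rightarrow> 'y) \<Rightarrow> bool" where
  "properly_amenable G X rX actX Y rY actY \<pi> \<longleftrightarrow>
     G_map G X rX actX Y rY actY \<pi> \<and> \<pi> ` space X = space Y \<and>
     (\<exists>m. pi_sys X Y \<pi> m \<and> (\<forall>y\<in>space Y. prob_space (m y)) \<and>
        (\<forall>g\<in>space (arrows G). \<forall>y\<in>space Y. src G g = rY y \<longrightarrow>
           gact_measure G X rX actX g (m y) = m (actY g y)))"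

definition G_amenable :: "'g groupoid \<Rightarrow> 'x measure \<Rightarrow> ('x \<Rightarrow> 'g) \<Rightarrow> ('g \<Rightarrow> 'x \<Rightarrow> 'x) \<Rightarrow>
    'y measure \<Rightarrow> ('y \<Rightarrow> 'g) \<Rightarrow> ('g \<Rightarrow> 'y \<Rightarrow> 'y) \<Rightarrow> ('x \<Rightarrow> 'y) \<Rightarrow> bool" where
  "G_amenable G X rX actX Y rY actY \<pi> \<longleftrightarrow>
     G_map G X rX actX Y rY actY \<pi> \<and> \<pi> ` space X = space Y \<and>
     (\<exists>m :: nat \<Rightarrow> 'y \<Rightarrow> 'x measure.
        (\<forall>n. pi_sys X Y \<pi> (m n) \<and> (\<forall>y\<in>space Y. prob_space (m n y))) \<and>
        (\<forall>g\<in>space (arrows G). \<forall>y\<in>space Y. src G g = rY y \<longrightarrow>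
           (\<lambda>n. tv_norm (gact_measure G X rX actX g (m n y)) (m n (actY g y))) \<longlonglongrightarrow> 0))"

text \<open>G acting on its unit space: g . src g = rng g; moment map the identity.\<close>
definition unit_action :: "'g groupoid \<Rightarrow> 'g \<Rightarrow> 'g \<Rightarrow> 'g" where
  "unit_action G g u = rng G g"

definition fib_prod :: "'g groupoid \<Rightarrow> 'x measure \<Rightarrow> ('x \<Rightarrow> 'g) \<Rightarrow> ('x \<times> 'g) measure" where
  "fib_prod G X rX = restrict_space (X \<Otimes>\<^sub>M arrows G)
     {(x, g). x \<in> space X \<and> g \<in> space (arrows G) \<and> rX x = rng G g}"

definition proper_G_space :: "'g groupoid \<Rightarrow> 'x measure \<Rightarrow> ('x \<Rightarrow> 'g) \<Rightarrow> ('g \<Rightarrow> 'x \<Rightarrow> 'x) \<Rightarrow> bool" where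
  "proper_G_space G X rX act \<longleftrightarrow> G_space G X rX act \<and>
     properly_amenable G (fib_prod G X rX) (\<lambda>(x, g). rX x)
       (\<lambda>h (x, g). (act h x, comp G h g)) X rX act fst"

definition borel_amenable :: "'g groupoid \<Rightarrow> bool" where
  "borel_amenable G \<longleftrightarrow>
     G_amenable G (arrows G) (rng G) (comp G) (unit_space G) (\<lambda>u. u) (unit_action G) (rng G)"

end

(*
  Pushing the proper system \<lambda>^x on X * G forward along (x, \<gamma>) \<mapsto> \<gamma> gives a Markov kernel
  \<kappa> from X to G which is equivariant, \<kappa>(\<gamma> x) = \<gamma> \<kappa>(x), and puts \<kappa>(x) on G^(r x).
  Averaging \<kappa> against the approximately invariant systems m_n^u on X gives probability
  measures \<mu>_n^u = m_n^u \<bind> \<kappa> on G^u, and equivariance gives \<gamma> \<mu>_n^u = (\<gamma> m_n^u) \<bind> \<kappa>.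
  A Markov kernel does not increase total variation (seen through a Hahn decomposition of
  the difference of the two measures), so
  \<parallel>\<gamma> \<mu>_n^u - \<mu>_n^(r \<gamma>)\<parallel> \<le> \<parallel>\<gamma> m_n^u - m_n^(r \<gamma>)\<parallel>, which tends to 0.
*)

theory Submission
  imports Defs
begin

lemma tv_norm_partition_sum_le_tv_norm:
  assumes "finite_measure \<mu>" "finite_measure \<nu>" "sets \<nu> = sets \<mu>"
    and "finite P" "P \<subseteq> sets \<mu>" "disjoint P"
  shows "(\<Sum>A\<in>P. \<bar>measure \<mu> A - measure \<nu> A\<bar>) \<le> tv_norm \<mu> \<nu>"
proof -
  interpret M: finite_measure \<mu> by fact
  interpret N: finite_measure \<nu> by fact
  have bound: "(\<Sum>A\<in>Q. \<bar>measure \<mu> A - measure \<nu> A\<bar>) \<le> measure \<mu> (space \<mu>) + measure \<nu> (space \<nu>)"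
    if Q: "finite Q" "Q \<subseteq> sets \<mu>" "disjoint Q" for Q
  proof -
    have "(\<Sum>A\<in>Q. \<bar>measure \<mu> A - measure \<nu> A\<bar>) \<le> (\<Sum>A\<in>Q. measure \<mu> A + measure \<nu> A)"
      by (intro sum_mono) (simp add: abs_le_iff)
    also have "\<dots> = measure \<mu> (\<Union>Q) + measure \<nu> (\<Union>Q)"
      using M.finite_measure_finite_Union[of Q id] N.finite_measure_finite_Union[of Q id] Q assms(3)
      by (simp add: sum.distrib disjoint_family_on_def disjoint_def)
    also have "\<dots> \<le> measure \<mu> (space \<mu>) + measure \<nu> (space \<nu>)"
      by (intro add_mono M.bounded_measure N.bounded_measure)
    finally show ?thesis .
  qed
  show ?thesis
    unfolding tv_norm_def using assms bound
    by (intro cSUP_upper bdd_aboveI[where M="measure \<mu> (space \<mu>) + measure \<nu> (space \<nu>)"]) auto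
qed

lemma tv_norm_nonneg:
  assumes "finite_measure \<mu>" "finite_measure \<nu>" "sets \<nu> = sets \<mu>"
  shows "0 \<le> tv_norm \<mu> \<nu>"
  using tv_norm_partition_sum_le_tv_norm[OF assms, of "{}"] by (simp add: disjoint_def)

lemma nn_integral_mult_indicator_mono_measure:
  fixes f :: "'a \<Rightarrow> ennreal"
  assumes sets_eq: "sets \<nu>2 = sets \<nu>1" and Y: "Y \<in> sets \<nu>1"
    and le: "\<And>A. A \<in> sets \<nu>1 \<Longrightarrow> A \<subseteq> Y \<Longrightarrow> emeasure \<nu>2 A \<le> emeasure \<nu>1 A"
    and f: "f \<in> borel_measurable \<nu>1"
  shows "(\<integral>\<^sup>+x. f x * indicator Y x \<partial>\<nu>2) \<le> (\<integral>\<^sup>+x. f x * indicator Y x \<partial>\<nu>1)"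
proof -
  have density_le: "density \<nu>2 (indicator Y) \<le> density \<nu>1 (indicator Y)"
    using sets_eq Y by (subst le_measure) (auto simp: emeasure_restricted le)
  have "(\<integral>\<^sup>+x. f x * indicator Y x \<partial>\<nu>i) = (\<integral>\<^sup>+x. f x \<partial>density \<nu>i (indicator Y))"
    if "sets \<nu>i = sets \<nu>1" for \<nu>i :: "'a measure"
    using that f Y by (subst nn_integral_density) (auto simp: mult.commute cong: measurable_cong_sets)
  then show ?thesis
    using sets_eq density_le by (simp add: nn_integral_mono_measure)
qed

lemma integral_mult_indicator_mono_measure:
  fixes f :: "'a \<Rightarrow> real"
  assumes sets_eq: "sets \<nu>2 = sets \<nu>1" and Y: "Y \<in> sets \<nu>1"
    and le: "\<And>A. A \<in> sets \<nu>1 \<Longrightarrow> A \<subseteq> Y \<Longrightarrow> emeasure \<nu>2 A \<le> emeasure \<nu>1 A"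
    and int1: "integrable \<nu>1 f" and int2: "integrable \<nu>2 f"
    and nonneg: "\<And>x. x \<in> space \<nu>1 \<Longrightarrow> 0 \<le> f x"
  shows "(\<integral>x. f x * indicator Y x \<partial>\<nu>2) \<le> (\<integral>x. f x * indicator Y x \<partial>\<nu>1)"
proof -
  have as_nn_integral: "ennreal (\<integral>x. f x * indicator Y x \<partial>\<nu>) = (\<integral>\<^sup>+x. ennreal (f x) * indicator Y x \<partial>\<nu>)"
    if "integrable \<nu> f" "sets \<nu> = sets \<nu>1" for \<nu>
    using that nonneg Y sets_eq_imp_space_eq[OF that(2)]
    by (subst nn_integral_eq_integral[symmetric])
       (auto intro!: integrable_real_mult_indicator nn_integral_cong split: split_indicator)
  have "ennreal (\<integral>x. f x * indicator Y x \<partial>\<nu>2) \<le> ennreal (\<integral>x. f x * indicator Y x \<partial>\<nu>1)"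
    using int1 int2 sets_eq Y le
    by (simp add: as_nn_integral nn_integral_mult_indicator_mono_measure)
  moreover have "0 \<le> (\<integral>x. f x * indicator Y x \<partial>\<nu>1)"
    using nonneg by (intro integral_nonneg_AE) (auto split: split_indicator)
  ultimately show ?thesis
    by simp
qed

locale hahn_decomposition = N1: finite_measure \<nu>1 + N2: finite_measure \<nu>2
  for \<nu>1 \<nu>2 :: "'a measure" and Y :: "'a set" +
  assumes sets_eq: "sets \<nu>2 = sets \<nu>1"
    and Y_sets: "Y \<in> sets \<nu>1"
    and emeasure_le_inside: "\<And>A. A \<in> sets \<nu>1 \<Longrightarrow> A \<subseteq> Y \<Longrightarrow> emeasure \<nu>2 A \<le> emeasure \<nu>1 A"
    and emeasure_le_outside: "\<And>A. A \<in> sets \<nu>1 \<Longrightarrow> A \<inter> Y = {} \<Longrightarrow> emeasure \<nu>1 A \<le> emeasure \<nu>2 A"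
begin

abbreviation Z :: "'a set" where
  "Z \<equiv> space \<nu>1 - Y"

text \<open>The integral of \<open>f\<close> against the variation measure \<open>|\<nu>1 - \<nu>2|\<close>.\<close>
definition variation_integral :: "('a \<Rightarrow> real) \<Rightarrow> real" where
  "variation_integral f =
     ((\<integral>x. f x * indicator Y x \<partial>\<nu>1) - (\<integral>x. f x * indicator Y x \<partial>\<nu>2)) +
     ((\<integral>x. f x * indicator Z x \<partial>\<nu>2) - (\<integral>x. f x * indicator Z x \<partial>\<nu>1))"

lemma space_eq: "space \<nu>2 = space \<nu>1"
  using sets_eq by (rule sets_eq_imp_space_eq)

lemma Z_sets: "Z \<in> sets \<nu>1"
  using Y_sets by auto

lemma integrable_bounded:
  fixes f :: "'a \<Rightarrow> real"
  assumes "f \<in> borel_measurable \<nu>1" "\<And>x. x \<in> space \<nu>1 \<Longrightarrow> \<bar>f x\<bar> \<le> c"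
  shows "integrable \<nu>1 f" "integrable \<nu>2 f"
  using assms sets_eq space_eq
  by (auto intro!: N1.integrable_const_bound[where B=c] N2.integrable_const_bound[where B=c]
      cong: measurable_cong_sets)

lemma integral_split:
  fixes f :: "'a \<Rightarrow> real"
  assumes "sets \<nu> = sets \<nu>1" "integrable \<nu> f"
  shows "(\<integral>x. f x \<partial>\<nu>) = (\<integral>x. f x * indicator Y x \<partial>\<nu>) + (\<integral>x. f x * indicator Z x \<partial>\<nu>)"
proof -
  have "(\<integral>x. f x \<partial>\<nu>) = (\<integral>x. f x * indicator Y x + f x * indicator Z x \<partial>\<nu>)"
    using sets_eq_imp_space_eq[OF assms(1)]
    by (intro Bochner_Integration.integral_cong) (auto simp: indicator_def)
  also have "\<dots> = (\<integral>x. f x * indicator Y x \<partial>\<nu>) + (\<integral>x. f x * indicator Z x \<partial>\<nu>)"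
    using assms Y_sets Z_sets by (intro Bochner_Integration.integral_add integrable_real_mult_indicator) auto
  finally show ?thesis .
qed

lemma integral_inside_outside_mono:
  fixes f :: "'a \<Rightarrow> real"
  assumes "integrable \<nu>1 f" "integrable \<nu>2 f" "\<And>x. x \<in> space \<nu>1 \<Longrightarrow> 0 \<le> f x"
  shows "(\<integral>x. f x * indicator Y x \<partial>\<nu>2) \<le> (\<integral>x. f x * indicator Y x \<partial>\<nu>1)"
    and "(\<integral>x. f x * indicator Z x \<partial>\<nu>1) \<le> (\<integral>x. f x * indicator Z x \<partial>\<nu>2)"
proof -
  show "(\<integral>x. f x * indicator Y x \<partial>\<nu>2) \<le> (\<integral>x. f x * indicator Y x \<partial>\<nu>1)"
    using assms sets_eq Y_sets emeasure_le_inside by (intro integral_mult_indicator_mono_measure)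
  show "(\<integral>x. f x * indicator Z x \<partial>\<nu>1) \<le> (\<integral>x. f x * indicator Z x \<partial>\<nu>2)"
    using assms sets_eq Z_sets space_eq
    by (intro integral_mult_indicator_mono_measure) (auto intro!: emeasure_le_outside)
qed

lemma variation_integral_nonneg:
  assumes "integrable \<nu>1 f" "integrable \<nu>2 f" "\<And>x. x \<in> space \<nu>1 \<Longrightarrow> 0 \<le> f x"
  shows "0 \<le> variation_integral f"
  using integral_inside_outside_mono[OF assms] unfolding variation_integral_def by linarith

lemma abs_integral_diff_le_variation_integral:
  assumes "integrable \<nu>1 f" "integrable \<nu>2 f" "\<And>x. x \<in> space \<nu>1 \<Longrightarrow> 0 \<le> f x"
  shows "\<bar>(\<integral>x. f x \<partial>\<nu>1) - (\<integral>x. f x \<partial>\<nu>2)\<bar> \<le> variation_integral f"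
  using integral_inside_outside_mono[OF assms] integral_split[OF refl assms(1)]
    integral_split[OF sets_eq assms(2)]
  unfolding variation_integral_def by linarith

lemma variation_integral_diff:
  assumes "integrable \<nu>1 f" "integrable \<nu>2 f" "integrable \<nu>1 g" "integrable \<nu>2 g"
  shows "variation_integral (\<lambda>x. f x - g x) = variation_integral f - variation_integral g"
  using assms Y_sets Z_sets sets_eq
  by (simp add: variation_integral_def left_diff_distrib integrable_real_mult_indicator)

lemma variation_integral_sum:
  assumes "\<And>i. i \<in> I \<Longrightarrow> integrable \<nu>1 (f i)" "\<And>i. i \<in> I \<Longrightarrow> integrable \<nu>2 (f i)"
  shows "variation_integral (\<lambda>x. \<Sum>i\<in>I. f i x) = (\<Sum>i\<in>I. variation_integral (f i))"
  using assms Y_sets Z_sets sets_eq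
  by (simp add: variation_integral_def sum_distrib_right integrable_real_mult_indicator
      integral_sum sum_subtractf sum.distrib)

lemma variation_integral_one_le_tv_norm: "variation_integral (\<lambda>_. 1) \<le> tv_norm \<nu>1 \<nu>2"
proof -
  have "variation_integral (\<lambda>_. 1) = (measure \<nu>1 Y - measure \<nu>2 Y) + (measure \<nu>2 Z - measure \<nu>1 Z)"
    using Y_sets Z_sets sets_eq space_eq unfolding variation_integral_def by (simp add: Int_absorb2)
  also have "\<dots> \<le> \<bar>measure \<nu>1 Y - measure \<nu>2 Y\<bar> + \<bar>measure \<nu>1 Z - measure \<nu>2 Z\<bar>"
    by linarith
  also have "\<dots> \<le> tv_norm \<nu>1 \<nu>2"
  proof (cases "Y = Z")
    case True
    then have "Y = {}" by blast
    then show ?thesis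
      using True tv_norm_nonneg[OF N1.finite_measure_axioms N2.finite_measure_axioms sets_eq] by simp
  next
    case False
    moreover have "Z \<inter> Y = {}" by blast
    ultimately show ?thesis
      using tv_norm_partition_sum_le_tv_norm[OF N1.finite_measure_axioms N2.finite_measure_axioms sets_eq,
          of "{Y, Z}"] Y_sets Z_sets
      by (simp add: disjoint_def)
  qed
  finally show ?thesis .
qed

lemma sum_abs_integral_diff_le_tv_norm:
  assumes P: "finite P" and k: "\<And>A. A \<in> P \<Longrightarrow> k A \<in> borel_measurable \<nu>1"
    and nonneg: "\<And>A x. A \<in> P \<Longrightarrow> x \<in> space \<nu>1 \<Longrightarrow> 0 \<le> k A x"
    and sum_le_1: "\<And>x. x \<in> space \<nu>1 \<Longrightarrow> (\<Sum>A\<in>P. k A x) \<le> 1"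
  shows "(\<Sum>A\<in>P. \<bar>(\<integral>x. k A x \<partial>\<nu>1) - (\<integral>x. k A x \<partial>\<nu>2)\<bar>) \<le> tv_norm \<nu>1 \<nu>2"
proof -
  let ?rest = "\<lambda>x. 1 - (\<Sum>A\<in>P. k A x)"
  have k_le_1: "k A x \<le> 1" if "A \<in> P" "x \<in> space \<nu>1" for A x
    using that P nonneg sum_le_1 member_le_sum[of A P "\<lambda>A. k A x"] by fastforce
  have int_k: "integrable \<nu>1 (k A)" "integrable \<nu>2 (k A)" if "A \<in> P" for A
    using that k nonneg k_le_1 by (auto intro!: integrable_bounded[where c=1])
  have int_rest: "integrable \<nu>1 ?rest" "integrable \<nu>2 ?rest"
    using P k nonneg sum_le_1
    by (auto intro!: integrable_bounded[where c=1] sum_nonneg borel_measurable_diff borel_measurable_sum)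
  have "(\<Sum>A\<in>P. \<bar>(\<integral>x. k A x \<partial>\<nu>1) - (\<integral>x. k A x \<partial>\<nu>2)\<bar>) \<le> (\<Sum>A\<in>P. variation_integral (k A))"
    using int_k nonneg by (intro sum_mono abs_integral_diff_le_variation_integral) auto
  also have "\<dots> = variation_integral (\<lambda>_. 1) - variation_integral ?rest"
    using int_k int_rest by (simp add: variation_integral_sum variation_integral_diff)
  also have "\<dots> \<le> variation_integral (\<lambda>_. 1)"
    using variation_integral_nonneg[OF int_rest] sum_le_1 by auto
  also have "\<dots> \<le> tv_norm \<nu>1 \<nu>2"
    by (rule variation_integral_one_le_tv_norm)
  finally show ?thesis .
qed

end

lemma tv_norm_bind_le:
  assumes sub1: "subprob_space \<nu>1" and sub2: "subprob_space \<nu>2"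
    and sets1: "sets \<nu>1 = sets M" and sets2: "sets \<nu>2 = sets M"
    and K: "K \<in> measurable M (subprob_algebra N)"
  shows "tv_norm (\<nu>1 \<bind> K) (\<nu>2 \<bind> K) \<le> tv_norm \<nu>1 \<nu>2"
proof -
  interpret S1: subprob_space \<nu>1 by fact
  interpret S2: subprob_space \<nu>2 by fact
  have sets_eq: "sets \<nu>2 = sets \<nu>1" using sets1 sets2 by simp
  have space1: "space \<nu>1 = space M" using sets1 by (rule sets_eq_imp_space_eq)
  obtain Y where "Y \<in> sets \<nu>1"
    "\<forall>A\<in>sets \<nu>1. A \<subseteq> Y \<longrightarrow> emeasure \<nu>2 A \<le> emeasure \<nu>1 A"
    "\<forall>A\<in>sets \<nu>1. A \<inter> Y = {} \<longrightarrow> emeasure \<nu>1 A \<le> emeasure \<nu>2 A"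
    using finite_unsigned_Hahn_decomposition[OF S1.finite_measure_axioms S2.finite_measure_axioms sets_eq]
    by blast
  then interpret H: hahn_decomposition \<nu>1 \<nu>2 Y
    using sets_eq by unfold_locales auto
  define k where "k A x = measure (K x) A" for A x
  have measure_bind: "measure (\<nu> \<bind> K) A = (\<integral>x. k A x \<partial>\<nu>)"
    if "subprob_space \<nu>" "sets \<nu> = sets M" "A \<in> sets N" for \<nu> A
    unfolding k_def using that K
    by (intro subprob_space.measure_bind) (auto simp: measurable_cong_sets[OF that(2) refl])
  have "sets (\<nu>1 \<bind> K) = sets N"
    using sets_kernel[OF K] space1 by (intro sets_bind S1.subprob_not_empty) auto
  then have tv_norm_bind: "tv_norm (\<nu>1 \<bind> K) (\<nu>2 \<bind> K) = (SUP P \<in> {P. finite P \<and> P \<subseteq> sets N \<and> disjoint P}.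
      \<Sum>A\<in>P. \<bar>measure (\<nu>1 \<bind> K) A - measure (\<nu>2 \<bind> K) A\<bar>)"
    by (simp add: tv_norm_def)
  show ?thesis
    unfolding tv_norm_bind
  proof (rule cSUP_least)
    show "{P. finite P \<and> P \<subseteq> sets N \<and> disjoint P} \<noteq> {}"
      by (auto intro!: exI[of _ "{}"] simp: disjoint_def)
  next
    fix P assume "P \<in> {P. finite P \<and> P \<subseteq> sets N \<and> disjoint P}"
    then have P: "finite P" "P \<subseteq> sets N" "disjoint P" by auto
    have sum_k: "(\<Sum>A\<in>P. k A x) = measure (K x) (\<Union>P)" if x: "x \<in> space M" for x
      using P sets_kernel[OF K x] finite_measure.finite_measure_finite_Union[OF subprob_space.axioms(1)[OF subprob_space_kernel[OF K x]], of P id]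
      by (simp add: k_def disjoint_family_on_def disjoint_def)
    have "(\<Sum>A\<in>P. \<bar>measure (\<nu>1 \<bind> K) A - measure (\<nu>2 \<bind> K) A\<bar>)
        = (\<Sum>A\<in>P. \<bar>(\<integral>x. k A x \<partial>\<nu>1) - (\<integral>x. k A x \<partial>\<nu>2)\<bar>)"
      using P sub1 sub2 sets1 sets2 by (intro sum.cong) (auto simp: measure_bind)
    also have "\<dots> \<le> tv_norm \<nu>1 \<nu>2"
    proof (rule H.sum_abs_integral_diff_le_tv_norm[OF P(1)])
      show "k A \<in> borel_measurable \<nu>1" if "A \<in> P" for A
        using K that P(2) sets1 unfolding k_def
        by (auto intro!: measurable_compose[OF _ measurable_measure_subprob_algebra] cong: measurable_cong_sets)
      show "0 \<le> k A x" for A x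
        by (simp add: k_def)
      show "(\<Sum>A\<in>P. k A x) \<le> 1" if "x \<in> space \<nu>1" for x
        using that space1 sum_k subprob_space.subprob_measure_le_1[OF subprob_space_kernel[OF K]] by simp
    qed
    finally show "(\<Sum>A\<in>P. \<bar>measure (\<nu>1 \<bind> K) A - measure (\<nu>2 \<bind> K) A\<bar>) \<le> tv_norm \<nu>1 \<nu>2" .
  qed
qed

text \<open>Analyticity enters the argument only through this fact.\<close>

lemma analytic_space_singleton_sets:
  assumes "analytic_space M" "x \<in> space M"
  shows "{x} \<in> sets M"
proof -
  obtain f :: "'a \<Rightarrow> real" and A where bij: "bij_betw f (space M) A"
    and f: "f \<in> measurable M (restrict_space borel A)"
    using assms(1) unfolding analytic_space_def by blast
  have "A \<inter> {f x} \<in> sets (restrict_space borel A)"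
    unfolding sets_restrict_space by (intro imageI) simp
  then have "f -` (A \<inter> {f x}) \<inter> space M \<in> sets M"
    by (rule measurable_sets[OF f])
  moreover have "f -` (A \<inter> {f x}) \<inter> space M = {x}"
    using bij assms(2) unfolding bij_betw_def inj_on_def by auto
  ultimately show ?thesis by simp
qed

lemma sets_gact_measure [simp]: "sets (gact_measure G X rX act g \<nu>) = sets X"
  by (simp add: gact_measure_def)

lemma space_gact_measure [simp]: "space (gact_measure G X rX act g \<nu>) = space X"
  by (simp add: gact_measure_def)

context
  fixes G :: "'g groupoid"
  assumes borel: "borel_groupoid G"
begin

lemma
  shows units_subset_arrows: "units G \<subseteq> space (arrows G)"
    and src_in_units: "a \<in> space (arrows G) \<Longrightarrow> src G a \<in> units G"
    and comp_in_arrows: "a \<in> space (arrows G) \<Longrightarrow> b \<in> space (arrows G) \<Longrightarrow> src G a = rng G b \<Longrightarrow>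
      comp G a b \<in> space (arrows G)"
    and rng_comp: "a \<in> space (arrows G) \<Longrightarrow> b \<in> space (arrows G) \<Longrightarrow> src G a = rng G b \<Longrightarrow>
      rng G (comp G a b) = rng G a"
    and comp_assoc: "a \<in> space (arrows G) \<Longrightarrow> b \<in> space (arrows G) \<Longrightarrow> c \<in> space (arrows G) \<Longrightarrow>
      src G a = rng G b \<Longrightarrow> src G b = rng G c \<Longrightarrow> comp G (comp G a b) c = comp G a (comp G b c)"
    and comp_rng_left: "a \<in> space (arrows G) \<Longrightarrow> comp G (rng G a) a = a"
  using borel unfolding borel_groupoid_def groupoid_def Let_def by blast+

lemma rng_in_units: "a \<in> space (arrows G) \<Longrightarrow> rng G a \<in> units G"
  unfolding units_def by simp

lemma space_unit_space: "space (unit_space G) = units G"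
  unfolding unit_space_def using units_subset_arrows by (simp add: space_restrict_space Int_absorb2)

lemma unit_space_singleton_sets:
  assumes "u \<in> units G"
  shows "{u} \<in> sets (unit_space G)"
proof -
  have "{u} \<in> sets (arrows G)"
    using borel assms units_subset_arrows unfolding borel_groupoid_def
    by (intro analytic_space_singleton_sets) auto
  then have "units G \<inter> {u} \<in> sets (unit_space G)"
    unfolding unit_space_def sets_restrict_space by (rule imageI)
  then show ?thesis using assms by (simp add: Int_absorb1)
qed

lemma G_space_arrows: "G_space G (arrows G) (rng G) (comp G)"
  unfolding G_space_def
proof (intro conjI ballI impI)
  show "analytic_space (arrows G)"
    using borel unfolding borel_groupoid_def by simp
  show "rng G \<in> measurable (arrows G) (unit_space G)"
    unfolding unit_space_def using borel rng_in_units unfolding borel_groupoid_def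
    by (intro measurable_restrict_space2) auto
  show "(\<lambda>(g, x). comp G g x) \<in> measurable (restrict_space (arrows G \<Otimes>\<^sub>M arrows G)
      {(g, x). g \<in> space (arrows G) \<and> x \<in> space (arrows G) \<and> src G g = rng G x}) (arrows G)"
    using borel unfolding borel_groupoid_def composable_pairs_def by simp
qed (use comp_in_arrows rng_comp comp_assoc comp_rng_left in auto)

lemma G_space_moment_fibre_sets:
  assumes "G_space G X rX act" "u \<in> units G"
  shows "{x \<in> space X. rX x = u} \<in> sets X"
proof -
  have "rX \<in> measurable X (unit_space G)"
    using assms(1) unfolding G_space_def by simp
  then have "rX -` {u} \<inter> space X \<in> sets X"
    using unit_space_singleton_sets[OF assms(2)] by (rule measurable_sets)
  moreover have "rX -` {u} \<inter> space X = {x \<in> space X. rX x = u}" by auto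
  ultimately show ?thesis by simp
qed

context
  fixes X :: "'x measure" and rX :: "'x \<Rightarrow> 'g" and act :: "'g \<Rightarrow> 'x \<Rightarrow> 'x" and g :: 'g
  assumes X: "G_space G X rX act" and g: "g \<in> space (arrows G)"
begin

lemma G_space_fibre_sets: "{x \<in> space X. rX x = src G g} \<in> sets X"
  using G_space_moment_fibre_sets[OF X src_in_units[OF g]] .

lemma G_space_act_measurable: "act g \<in> measurable (restrict_space X {x \<in> space X. rX x = src G g}) X"
proof -
  let ?S = "{(g, x). g \<in> space (arrows G) \<and> x \<in> space X \<and> src G g = rX x}"
  have "(\<lambda>(g, x). act g x) \<in> measurable (restrict_space (arrows G \<Otimes>\<^sub>M X) ?S) X"
    using X unfolding G_space_def by simp
  moreover have "Pair g \<in> measurable (restrict_space X {x \<in> space X. rX x = src G g}) (restrict_space (arrows G \<Otimes>\<^sub>M X) ?S)"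
    using g by (intro measurable_restrict_space3[OF measurable_Pair1']) auto
  ultimately show ?thesis
    by (metis (no_types, lifting) case_prod_conv measurable_compose measurable_cong)
qed

lemma gact_preimage_sets:
  assumes "E \<in> sets X"
  shows "{x \<in> space X. rX x = src G g \<and> act g x \<in> E} \<in> sets X"
proof -
  let ?F = "{x \<in> space X. rX x = src G g}"
  have "act g -` E \<inter> space (restrict_space X ?F) \<in> sets (restrict_space X ?F)"
    by (rule measurable_sets[OF G_space_act_measurable assms])
  then have "act g -` E \<inter> space (restrict_space X ?F) \<in> sets X"
    using G_space_fibre_sets by (subst (asm) sets_restrict_space_iff) (auto simp: Int_absorb2)
  moreover have "act g -` E \<inter> space (restrict_space X ?F) = {x \<in> space X. rX x = src G g \<and> act g x \<in> E}"
    by (auto simp: space_restrict_space)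
  ultimately show ?thesis by simp
qed

lemma gact_measure_eq_distr:
  assumes "sets \<nu> = sets X"
  shows "gact_measure G X rX act g \<nu> = distr (restrict_space \<nu> {x \<in> space X. rX x = src G g}) X (act g)"
proof -
  let ?F = "{x \<in> space X. rX x = src G g}"
  have space_eq: "space \<nu> = space X" using assms by (rule sets_eq_imp_space_eq)
  have F: "?F \<inter> space \<nu> \<in> sets \<nu>"
    using G_space_fibre_sets assms space_eq by (simp add: Int_absorb2)
  show ?thesis
    unfolding gact_measure_def distr_def
  proof (rule measure_of_eq[OF sets.space_closed])
    fix E
    have "act g -` E \<inter> space (restrict_space \<nu> ?F) = {x \<in> space X. rX x = src G g \<and> act g x \<in> E}"
      using space_eq by (auto simp: space_restrict_space)
    moreover have "emeasure (restrict_space \<nu> ?F) {x \<in> space X. rX x = src G g \<and> act g x \<in> E}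
        = emeasure \<nu> {x \<in> space X. rX x = src G g \<and> act g x \<in> E}"
      by (rule emeasure_restrict_space[OF F]) auto
    ultimately show "emeasure \<nu> {x \<in> space X. rX x = src G g \<and> act g x \<in> E} =
        emeasure (restrict_space \<nu> ?F) (act g -` E \<inter> space (restrict_space \<nu> ?F))"
      by simp
  qed
qed

lemma act_measurable_restrict_fibre:
  assumes "sets \<nu> = sets X"
  shows "act g \<in> measurable (restrict_space \<nu> {x \<in> space X. rX x = src G g}) X"
proof -
  have "sets (restrict_space \<nu> {x \<in> space X. rX x = src G g}) = sets (restrict_space X {x \<in> space X. rX x = src G g})"
    unfolding sets_restrict_space assms ..
  then show ?thesis
    using G_space_act_measurable by (simp cong: measurable_cong_sets)
qed

lemma emeasure_gact_measure:
  assumes "sets \<nu> = sets X" "E \<in> sets X"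
  shows "emeasure (gact_measure G X rX act g \<nu>) E = emeasure \<nu> {x \<in> space X. rX x = src G g \<and> act g x \<in> E}"
proof -
  let ?F = "{x \<in> space X. rX x = src G g}"
  have space_eq: "space \<nu> = space X" using assms(1) by (rule sets_eq_imp_space_eq)
  have F: "?F \<inter> space \<nu> \<in> sets \<nu>"
    using G_space_fibre_sets assms(1) space_eq by (simp add: Int_absorb2)
  have "emeasure (gact_measure G X rX act g \<nu>) E = emeasure (restrict_space \<nu> ?F) (act g -` E \<inter> space (restrict_space \<nu> ?F))"
    using assms by (simp add: gact_measure_eq_distr emeasure_distr act_measurable_restrict_fibre)
  also have "act g -` E \<inter> space (restrict_space \<nu> ?F) = {x \<in> space X. rX x = src G g \<and> act g x \<in> E}"
    using space_eq by (auto simp: space_restrict_space)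
  also have "emeasure (restrict_space \<nu> ?F) \<dots> = emeasure \<nu> {x \<in> space X. rX x = src G g \<and> act g x \<in> E}"
    by (rule emeasure_restrict_space[OF F]) auto
  finally show ?thesis .
qed

lemma nn_integral_gact_measure:
  assumes "sets \<nu> = sets X" "f \<in> borel_measurable X"
  shows "(\<integral>\<^sup>+y. f y \<partial>gact_measure G X rX act g \<nu>) =
    (\<integral>\<^sup>+x. f (act g x) * indicator {x \<in> space X. rX x = src G g} x \<partial>\<nu>)"
proof -
  have space_eq: "space \<nu> = space X" using assms(1) by (rule sets_eq_imp_space_eq)
  have "{x \<in> space X. rX x = src G g} \<inter> space \<nu> \<in> sets \<nu>"
    using G_space_fibre_sets assms(1) space_eq by (simp add: Int_absorb2)
  then show ?thesis
    using assms act_measurable_restrict_fibre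
    by (simp add: gact_measure_eq_distr nn_integral_distr nn_integral_restrict_space)
qed

lemma subprob_space_gact_measure:
  assumes "subprob_space \<nu>" "sets \<nu> = sets X"
  shows "subprob_space (gact_measure G X rX act g \<nu>)"
proof (rule subprob_spaceI)
  interpret subprob_space \<nu> by fact
  have space_eq: "space \<nu> = space X" using assms(2) by (rule sets_eq_imp_space_eq)
  show "space (gact_measure G X rX act g \<nu>) \<noteq> {}"
    using subprob_not_empty space_eq by (simp add: gact_measure_def)
  have "emeasure (gact_measure G X rX act g \<nu>) (space X) \<le> emeasure \<nu> (space \<nu>)"
    using assms(2) space_eq gact_preimage_sets
    by (simp add: emeasure_gact_measure emeasure_mono)
  then show "emeasure (gact_measure G X rX act g \<nu>) (space (gact_measure G X rX act g \<nu>)) \<le> 1"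
    using emeasure_space_le_1 by (simp add: gact_measure_def)
qed

end

lemma gact_measure_distr:
  assumes \<pi>: "G_map G Y rY actY Z rZ actZ \<pi>" and g: "g \<in> space (arrows G)" and \<nu>: "sets \<nu> = sets Y"
  shows "gact_measure G Z rZ actZ g (distr \<nu> Z \<pi>) = distr (gact_measure G Y rY actY g \<nu>) Z \<pi>"
proof (rule measure_eqI)
  have Y: "G_space G Y rY actY" and Z: "G_space G Z rZ actZ" and \<pi>_meas: "\<pi> \<in> measurable Y Z"
    and rZ_\<pi>: "\<And>y. y \<in> space Y \<Longrightarrow> rZ (\<pi> y) = rY y"
    and \<pi>_act: "\<And>y. y \<in> space Y \<Longrightarrow> src G g = rY y \<Longrightarrow> \<pi> (actY g y) = actZ g (\<pi> y)"
    using \<pi> g unfolding G_map_def by auto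
  have space_eq: "space \<nu> = space Y" using \<nu> by (rule sets_eq_imp_space_eq)
  show "sets (gact_measure G Z rZ actZ g (distr \<nu> Z \<pi>)) = sets (distr (gact_measure G Y rY actY g \<nu>) Z \<pi>)"
    by simp
  fix E assume "E \<in> sets (gact_measure G Z rZ actZ g (distr \<nu> Z \<pi>))"
  then have E: "E \<in> sets Z" by simp
  have act_Y: "actY g y \<in> space Y" if "y \<in> space Y" "rY y = src G g" for y
    using Y g that unfolding G_space_def by auto
  have \<pi>_meas\<nu>: "\<pi> \<in> measurable \<nu> Z" and \<pi>_meas\<nu>': "\<pi> \<in> measurable (gact_measure G Y rY actY g \<nu>) Z"
    using \<pi>_meas \<nu> by (simp_all cong: measurable_cong_sets)
  let ?E' = "{z \<in> space Z. rZ z = src G g \<and> actZ g z \<in> E}"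
  have "emeasure (gact_measure G Z rZ actZ g (distr \<nu> Z \<pi>)) E = emeasure (distr \<nu> Z \<pi>) ?E'"
    using E by (simp add: emeasure_gact_measure[OF Z g])
  also have "\<dots> = emeasure \<nu> (\<pi> -` ?E' \<inter> space Y)"
    using gact_preimage_sets[OF Z g E] space_eq by (simp add: emeasure_distr[OF \<pi>_meas\<nu>])
  also have "\<pi> -` ?E' \<inter> space Y = {y \<in> space Y. rY y = src G g \<and> actY g y \<in> \<pi> -` E \<inter> space Y}"
    using measurable_space[OF \<pi>_meas] rZ_\<pi> \<pi>_act act_Y by auto
  also have "emeasure \<nu> \<dots> = emeasure (gact_measure G Y rY actY g \<nu>) (\<pi> -` E \<inter> space Y)"
    using \<nu> measurable_sets[OF \<pi>_meas E] by (simp add: emeasure_gact_measure[OF Y g])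
  also have "\<dots> = emeasure (distr (gact_measure G Y rY actY g \<nu>) Z \<pi>) E"
    using E by (simp add: emeasure_distr[OF \<pi>_meas\<nu>'])
  finally show "emeasure (gact_measure G Z rZ actZ g (distr \<nu> Z \<pi>)) E = emeasure (distr (gact_measure G Y rY actY g \<nu>) Z \<pi>) E" .
qed

lemma gact_measure_bind:
  assumes X: "G_space G X rX actX" and Z: "G_space G Z rZ actZ" and g: "g \<in> space (arrows G)"
    and \<nu>: "subprob_space \<nu>" "sets \<nu> = sets X" and fibre: "AE x in \<nu>. rX x = src G g"
    and K: "K \<in> measurable X (subprob_algebra Z)"
    and K_equivariant: "\<And>x. x \<in> space X \<Longrightarrow> rX x = src G g \<Longrightarrow>
      K (actX g x) = gact_measure G Z rZ actZ g (K x)"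
  shows "gact_measure G Z rZ actZ g (\<nu> \<bind> K) = gact_measure G X rX actX g \<nu> \<bind> K"
proof (rule measure_eqI)
  let ?\<nu>' = "gact_measure G X rX actX g \<nu>"
  have \<nu>'_not_empty: "space ?\<nu>' \<noteq> {}"
    using subprob_space.subprob_not_empty[OF subprob_space_gact_measure[OF X g \<nu>]] .
  have \<nu>_not_empty: "space \<nu> \<noteq> {}"
    using subprob_space.subprob_not_empty[OF \<nu>(1)] .
  have K\<nu>: "K \<in> measurable \<nu> (subprob_algebra Z)" and K\<nu>': "K \<in> measurable ?\<nu>' (subprob_algebra Z)"
    using K \<nu>(2) by (simp_all cong: measurable_cong_sets)
  show "sets (gact_measure G Z rZ actZ g (\<nu> \<bind> K)) = sets (?\<nu>' \<bind> K)"
    using sets_bind[OF sets_kernel[OF K\<nu>'] \<nu>'_not_empty] by simp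
  fix E assume "E \<in> sets (gact_measure G Z rZ actZ g (\<nu> \<bind> K))"
  then have E: "E \<in> sets Z" by simp
  let ?E' = "{z \<in> space Z. rZ z = src G g \<and> actZ g z \<in> E}"
  have "emeasure (gact_measure G Z rZ actZ g (\<nu> \<bind> K)) E = emeasure (\<nu> \<bind> K) ?E'"
    using sets_bind[OF sets_kernel[OF K\<nu>] \<nu>_not_empty] E by (simp add: emeasure_gact_measure[OF Z g])
  also have "\<dots> = (\<integral>\<^sup>+x. emeasure (K x) ?E' \<partial>\<nu>)"
    using gact_preimage_sets[OF Z g E] by (rule emeasure_bind[OF \<nu>_not_empty K\<nu>])
  also have "\<dots> = (\<integral>\<^sup>+x. emeasure (K (actX g x)) E * indicator {x \<in> space X. rX x = src G g} x \<partial>\<nu>)"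
  proof (rule nn_integral_cong_AE)
    show "AE x in \<nu>. emeasure (K x) ?E' = emeasure (K (actX g x)) E * indicator {x \<in> space X. rX x = src G g} x"
      using fibre AE_space
    proof eventually_elim
      case (elim x)
      then have "x \<in> space X" using sets_eq_imp_space_eq[OF \<nu>(2)] by simp
      then show ?case
        using elim E sets_kernel[OF K] by (simp add: K_equivariant emeasure_gact_measure[OF Z g])
    qed
  qed
  also have "\<dots> = (\<integral>\<^sup>+y. emeasure (K y) E \<partial>?\<nu>')"
    using \<nu>(2) measurable_emeasure_kernel[OF K E] by (simp add: nn_integral_gact_measure[OF X g])
  also have "\<dots> = emeasure (?\<nu>' \<bind> K) E"
    using E by (simp add: emeasure_bind[OF \<nu>'_not_empty K\<nu>'])
  finally show "emeasure (gact_measure G Z rZ actZ g (\<nu> \<bind> K)) E = emeasure (?\<nu>' \<bind> K) E" .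
qed

end

locale proper_amenable_systems =
  fixes G :: "'g groupoid" and X :: "'x measure" and rX :: "'x \<Rightarrow> 'g" and act :: "'g \<Rightarrow> 'x \<Rightarrow> 'x"
    and lam :: "'x \<Rightarrow> ('x \<times> 'g) measure" and m :: "nat \<Rightarrow> 'g \<Rightarrow> 'x measure"
  assumes borel: "borel_groupoid G"
    and X: "G_space G X rX act"
    and unit_space: "G_space G (unit_space G) (\<lambda>u. u) (unit_action G)"
      \<comment> \<open>not derivable from \<open>borel\<close>, as it includes analyticity of the unit space\<close>
    and fib_prod: "G_space G (fib_prod G X rX) (\<lambda>(x, g). rX x) (\<lambda>h (x, g). (act h x, comp G h g))"
    and lam_pi_sys: "pi_sys (fib_prod G X rX) X fst lam"
    and lam_prob: "\<And>x. x \<in> space X \<Longrightarrow> prob_space (lam x)"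
    and lam_equivariant: "\<And>h x. h \<in> space (arrows G) \<Longrightarrow> x \<in> space X \<Longrightarrow> src G h = rX x \<Longrightarrow>
      gact_measure G (fib_prod G X rX) (\<lambda>(x, g). rX x) (\<lambda>h (x, g). (act h x, comp G h g)) h (lam x) = lam (act h x)"
    and m_pi_sys: "\<And>n. pi_sys X (unit_space G) rX (m n)"
    and m_prob: "\<And>n u. u \<in> space (unit_space G) \<Longrightarrow> prob_space (m n u)"
    and m_almost_invariant: "\<And>g u. g \<in> space (arrows G) \<Longrightarrow> u \<in> space (unit_space G) \<Longrightarrow> src G g = u \<Longrightarrow>
      (\<lambda>n. tv_norm (gact_measure G X rX act g (m n u)) (m n (unit_action G g u))) \<longlonglongrightarrow> 0"
begin

definition arrow_kernel :: "'x \<Rightarrow> 'g measure" where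
  "arrow_kernel x = distr (lam x) (arrows G) snd"

definition arrow_system :: "nat \<Rightarrow> 'g \<Rightarrow> 'g measure" where
  "arrow_system n u = m n u \<bind> arrow_kernel"

lemma space_fib_prod:
  "space (fib_prod G X rX) = {(x, g). x \<in> space X \<and> g \<in> space (arrows G) \<and> rX x = rng G g}"
  unfolding fib_prod_def by (auto simp: space_restrict_space space_pair_measure)

lemma snd_measurable_fib_prod: "snd \<in> measurable (fib_prod G X rX) (arrows G)"
  unfolding fib_prod_def by (intro measurable_restrict_space1 measurable_snd)

lemma sets_lam: "x \<in> space X \<Longrightarrow> sets (lam x) = sets (fib_prod G X rX)"
  using lam_pi_sys unfolding pi_sys_def by blast

lemma snd_measurable_lam: "x \<in> space X \<Longrightarrow> snd \<in> measurable (lam x) (arrows G)"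
  using snd_measurable_fib_prod sets_lam by (simp cong: measurable_cong_sets)

lemma prob_space_arrow_kernel: "x \<in> space X \<Longrightarrow> prob_space (arrow_kernel x)"
  unfolding arrow_kernel_def by (rule prob_space.prob_space_distr[OF lam_prob snd_measurable_lam])

lemma emeasure_arrow_kernel:
  "x \<in> space X \<Longrightarrow> A \<in> sets (arrows G) \<Longrightarrow>
    emeasure (arrow_kernel x) A = emeasure (lam x) (snd -` A \<inter> space (fib_prod G X rX))"
  unfolding arrow_kernel_def
  by (simp add: emeasure_distr[OF snd_measurable_lam] sets_eq_imp_space_eq[OF sets_lam])

lemma arrow_kernel_measurable: "arrow_kernel \<in> measurable X (subprob_algebra (arrows G))"
proof (rule measurable_subprob_algebra)
  fix x assume "x \<in> space X"
  then show "subprob_space (arrow_kernel x)"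
    by (rule prob_space_imp_subprob_space[OF prob_space_arrow_kernel])
  show "sets (arrow_kernel x) = sets (arrows G)"
    by (simp add: arrow_kernel_def)
next
  fix A assume A: "A \<in> sets (arrows G)"
  let ?B = "snd -` A \<inter> space (fib_prod G X rX)"
  have B: "?B \<in> sets (fib_prod G X rX)"
    by (rule measurable_sets[OF snd_measurable_fib_prod A])
  then have "(\<lambda>x. \<integral>\<^sup>+ p. indicator ?B p \<partial>lam x) \<in> borel_measurable X"
    using lam_pi_sys unfolding pi_sys_def by auto
  moreover have "(\<integral>\<^sup>+ p. indicator ?B p \<partial>lam x) = emeasure (arrow_kernel x) A" if "x \<in> space X" for x
    using that A B by (simp add: emeasure_arrow_kernel sets_lam)
  ultimately show "(\<lambda>x. emeasure (arrow_kernel x) A) \<in> borel_measurable X"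
    by (simp cong: measurable_cong)
qed

lemma G_map_snd:
  "G_map G (fib_prod G X rX) (\<lambda>(x, g). rX x) (\<lambda>h (x, g). (act h x, comp G h g))
     (arrows G) (rng G) (comp G) snd"
  using fib_prod G_space_arrows[OF borel] snd_measurable_fib_prod
  unfolding G_map_def space_fib_prod by auto

lemma arrow_kernel_equivariant:
  assumes "x \<in> space X" "g \<in> space (arrows G)" "rX x = src G g"
  shows "arrow_kernel (act g x) = gact_measure G (arrows G) (rng G) (comp G) g (arrow_kernel x)"
  using assms sets_lam[OF assms(1)]
  by (simp add: arrow_kernel_def gact_measure_distr[OF borel G_map_snd] lam_equivariant[symmetric])

lemma arrow_kernel_fibre:
  assumes x: "x \<in> space X"
  shows "emeasure (arrow_kernel x) {a \<in> space (arrows G). rng G a \<noteq> rX x} = 0"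
proof -
  obtain B where B: "B \<in> sets (fib_prod G X rX)" "B \<subseteq> fst -` {x}"
      "emeasure (lam x) (space (fib_prod G X rX) - B) = 0"
    using lam_pi_sys x unfolding pi_sys_def by blast
  have "rX x \<in> units G"
    using X x space_unit_space[OF borel] unfolding G_space_def by (auto dest: measurable_space)
  then have "space (arrows G) - {a \<in> space (arrows G). rng G a = rX x} \<in> sets (arrows G)"
    using G_space_moment_fibre_sets[OF borel G_space_arrows[OF borel]] by auto
  moreover have "space (arrows G) - {a \<in> space (arrows G). rng G a = rX x} = {a \<in> space (arrows G). rng G a \<noteq> rX x}"
    by auto
  ultimately have "emeasure (arrow_kernel x) {a \<in> space (arrows G). rng G a \<noteq> rX x}
      = emeasure (lam x) (snd -` {a \<in> space (arrows G). rng G a \<noteq> rX x} \<inter> space (fib_prod G X rX))"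
    using x by (simp add: emeasure_arrow_kernel)
  also have "\<dots> \<le> emeasure (lam x) (space (fib_prod G X rX) - B)"
  proof (rule emeasure_mono)
    show "snd -` {a \<in> space (arrows G). rng G a \<noteq> rX x} \<inter> space (fib_prod G X rX) \<subseteq> space (fib_prod G X rX) - B"
      using B(2) by (auto simp: space_fib_prod)
    show "space (fib_prod G X rX) - B \<in> sets (lam x)"
      using B(1) sets_lam[OF x] by auto
  qed
  finally show ?thesis
    using B(3) by simp
qed

lemma sets_m: "u \<in> space (unit_space G) \<Longrightarrow> sets (m n u) = sets X"
  using m_pi_sys[of n] unfolding pi_sys_def by blast

lemma AE_m_fibre:
  assumes u: "u \<in> space (unit_space G)"
  shows "AE x in m n u. x \<in> space X \<and> rX x = u"
proof -
  obtain A where A: "A \<in> sets X" "A \<subseteq> rX -` {u}" "emeasure (m n u) (space X - A) = 0"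
    using m_pi_sys[of n] u unfolding pi_sys_def by blast
  show ?thesis
  proof (rule AE_I')
    show "space X - A \<in> null_sets (m n u)"
      using A sets_m[OF u] by auto
    show "{x \<in> space (m n u). \<not> (x \<in> space X \<and> rX x = u)} \<subseteq> space X - A"
      using A sets_eq_imp_space_eq[OF sets_m[OF u]] by auto
  qed
qed

lemma arrow_kernel_measurable_m:
  "u \<in> space (unit_space G) \<Longrightarrow> arrow_kernel \<in> measurable (m n u) (subprob_algebra (arrows G))"
  using arrow_kernel_measurable sets_m by (simp cong: measurable_cong_sets)

lemma sets_arrow_system:
  assumes "u \<in> space (unit_space G)"
  shows "sets (arrow_system n u) = sets (arrows G)"
  unfolding arrow_system_def
  by (rule sets_bind[OF sets_kernel[OF arrow_kernel_measurable_m[OF assms]] prob_space.not_empty[OF m_prob[OF assms]]])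

lemma prob_space_arrow_system: "u \<in> space (unit_space G) \<Longrightarrow> prob_space (arrow_system n u)"
  unfolding arrow_system_def
  by (rule prob_space.prob_space_bind[OF m_prob _ arrow_kernel_measurable_m])
     (auto simp: sets_eq_imp_space_eq[OF sets_m] prob_space_arrow_kernel)

lemma pi_sys_arrow_system: "pi_sys (arrows G) (unit_space G) (rng G) (arrow_system n)"
  unfolding pi_sys_def
proof (intro conjI ballI)
  fix u assume u: "u \<in> space (unit_space G)"
  show "sets (arrow_system n u) = sets (arrows G)"
    using u by (rule sets_arrow_system)
  let ?A = "{a \<in> space (arrows G). rng G a = u}"
  have A: "?A \<in> sets (arrows G)"
    using u space_unit_space[OF borel] G_space_moment_fibre_sets[OF borel G_space_arrows[OF borel]] by simp
  have "emeasure (arrow_system n u) (space (arrows G) - ?A) = (\<integral>\<^sup>+x. emeasure (arrow_kernel x) (space (arrows G) - ?A) \<partial>m n u)"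
    unfolding arrow_system_def using A
    by (intro emeasure_bind[OF prob_space.not_empty[OF m_prob[OF u]] arrow_kernel_measurable_m[OF u]]) auto
  also have "\<dots> = (\<integral>\<^sup>+x. 0 \<partial>m n u)"
    using AE_m_fibre[OF u]
  proof (intro nn_integral_cong_AE, eventually_elim)
    case (elim x)
    then have "space (arrows G) - ?A = {a \<in> space (arrows G). rng G a \<noteq> rX x}" by auto
    then show ?case
      using elim arrow_kernel_fibre[of x] by simp
  qed
  finally show "\<exists>A\<in>sets (arrows G). A \<subseteq> rng G -` {u} \<and> emeasure (arrow_system n u) (space (arrows G) - A) = 0"
    using A by (intro bexI[of _ ?A]) auto
next
  fix f :: "'g \<Rightarrow> ennreal" assume f: "f \<in> borel_measurable (arrows G)"
  let ?F = "\<lambda>x. \<integral>\<^sup>+ p. f (snd p) \<partial>lam x"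
  have "?F \<in> borel_measurable X"
    using lam_pi_sys measurable_compose[OF snd_measurable_fib_prod f] unfolding pi_sys_def by blast
  then have "(\<lambda>u. \<integral>\<^sup>+x. ?F x \<partial>m n u) \<in> borel_measurable (unit_space G)"
    using m_pi_sys[of n] unfolding pi_sys_def by blast
  moreover have "(\<integral>\<^sup>+ a. f a \<partial>arrow_system n u) = (\<integral>\<^sup>+x. ?F x \<partial>m n u)" if u: "u \<in> space (unit_space G)" for u
    unfolding arrow_system_def nn_integral_bind[OF f arrow_kernel_measurable_m[OF u]]
    using f sets_eq_imp_space_eq[OF sets_m[OF u]]
    by (intro nn_integral_cong) (simp add: arrow_kernel_def nn_integral_distr snd_measurable_lam)
  ultimately show "(\<lambda>u. \<integral>\<^sup>+ a. f a \<partial>arrow_system n u) \<in> borel_measurable (unit_space G)"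
    by (simp cong: measurable_cong)
qed

lemma gact_measure_arrow_system:
  assumes g: "g \<in> space (arrows G)" and u: "u \<in> space (unit_space G)" and gu: "src G g = u"
  shows "gact_measure G (arrows G) (rng G) (comp G) g (arrow_system n u) =
    gact_measure G X rX act g (m n u) \<bind> arrow_kernel"
  unfolding arrow_system_def
proof (rule gact_measure_bind[OF borel X G_space_arrows[OF borel] g _ _ _ arrow_kernel_measurable])
  show "subprob_space (m n u)" "sets (m n u) = sets X"
    using u by (simp_all add: prob_space_imp_subprob_space m_prob sets_m)
  show "AE x in m n u. rX x = src G g"
    using AE_m_fibre[OF u] gu by auto
qed (auto intro: arrow_kernel_equivariant[OF _ g])

lemma tv_norm_arrow_system_le:
  assumes g: "g \<in> space (arrows G)" and u: "u \<in> space (unit_space G)" and gu: "src G g = u"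
  shows "tv_norm (gact_measure G (arrows G) (rng G) (comp G) g (arrow_system n u)) (arrow_system n (rng G g))
    \<le> tv_norm (gact_measure G X rX act g (m n u)) (m n (rng G g))"
proof -
  have rg: "rng G g \<in> space (unit_space G)"
    using rng_in_units[OF borel g] space_unit_space[OF borel] by simp
  have "tv_norm (gact_measure G (arrows G) (rng G) (comp G) g (arrow_system n u)) (arrow_system n (rng G g))
      = tv_norm (gact_measure G X rX act g (m n u) \<bind> arrow_kernel) (m n (rng G g) \<bind> arrow_kernel)"
    unfolding gact_measure_arrow_system[OF assms] by (simp add: arrow_system_def)
  also have "\<dots> \<le> tv_norm (gact_measure G X rX act g (m n u)) (m n (rng G g))"
    using u rg
    by (intro tv_norm_bind_le[OF _ _ _ _ arrow_kernel_measurable] subprob_space_gact_measure[OF borel X g])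
       (simp_all add: prob_space_imp_subprob_space m_prob sets_m)
  finally show ?thesis .
qed

theorem borel_amenable: "borel_amenable G"
  unfolding borel_amenable_def G_amenable_def
proof (intro conjI exI[of _ arrow_system] allI ballI impI)
  show "G_map G (arrows G) (rng G) (comp G) (unit_space G) (\<lambda>u. u) (unit_action G) (rng G)"
    using G_space_arrows[OF borel] unit_space rng_comp[OF borel]
    unfolding G_map_def G_space_def by (auto simp: unit_action_def)
  show "rng G ` space (arrows G) = space (unit_space G)"
    unfolding space_unit_space[OF borel] units_def ..
  show "pi_sys (arrows G) (unit_space G) (rng G) (arrow_system n)" for n
    by (rule pi_sys_arrow_system)
  show "prob_space (arrow_system n u)" if "u \<in> space (unit_space G)" for n u
    using that by (rule prob_space_arrow_system)
  fix g u assume g: "g \<in> space (arrows G)" and u: "u \<in> space (unit_space G)" and gu: "src G g = u"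
  have rg: "rng G g \<in> space (unit_space G)"
    using rng_in_units[OF borel g] space_unit_space[OF borel] by simp
  show "(\<lambda>n. tv_norm (gact_measure G (arrows G) (rng G) (comp G) g (arrow_system n u))
      (arrow_system n (unit_action G g u))) \<longlonglongrightarrow> 0"
  proof (rule tendsto_sandwich[OF _ _ tendsto_const m_almost_invariant[OF g u gu]]; intro always_eventually allI)
    fix n
    show "tv_norm (gact_measure G (arrows G) (rng G) (comp G) g (arrow_system n u)) (arrow_system n (unit_action G g u))
        \<le> tv_norm (gact_measure G X rX act g (m n u)) (m n (unit_action G g u))"
      using tv_norm_arrow_system_le[OF g u gu] by (simp add: unit_action_def)
    have "subprob_space (gact_measure G (arrows G) (rng G) (comp G) g (arrow_system n u))"
      using u by (intro subprob_space_gact_measure[OF borel G_space_arrows[OF borel] g])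
        (simp_all add: prob_space_imp_subprob_space prob_space_arrow_system sets_arrow_system)
    then show "0 \<le> tv_norm (gact_measure G (arrows G) (rng G) (comp G) g (arrow_system n u)) (arrow_system n (unit_action G g u))"
      using rg u
      by (intro tv_norm_nonneg subprob_space.axioms(1) prob_space.axioms(1))
         (simp_all add: unit_action_def prob_space_arrow_system sets_arrow_system)
  qed
qed

end

theorem lemma2p7:
  fixes G :: "'g groupoid" and X :: "'x measure" and rX :: "'x \<Rightarrow> 'g"
    and act :: "'g \<Rightarrow> 'x \<Rightarrow> 'x"
  assumes "borel_groupoid G"
    and "proper_G_space G X rX act"
    and "G_amenable G X rX act (unit_space G) (\<lambda>u. u) (unit_action G) rX"
  shows "borel_amenable G"
proof -
  have X: "G_space G X rX act"
    and proper: "properly_amenable G (fib_prod G X rX) (\<lambda>(x, g). rX x)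
      (\<lambda>h (x, g). (act h x, comp G h g)) X rX act fst"
    using assms(2) unfolding proper_G_space_def by simp_all
  have fib_prod: "G_space G (fib_prod G X rX) (\<lambda>(x, g). rX x) (\<lambda>h (x, g). (act h x, comp G h g))"
    using proper unfolding properly_amenable_def G_map_def by simp
  obtain lam where lam: "pi_sys (fib_prod G X rX) X fst lam" "\<And>x. x \<in> space X \<Longrightarrow> prob_space (lam x)"
    "\<And>h x. h \<in> space (arrows G) \<Longrightarrow> x \<in> space X \<Longrightarrow> src G h = rX x \<Longrightarrow>
       gact_measure G (fib_prod G X rX) (\<lambda>(x, g). rX x) (\<lambda>h (x, g). (act h x, comp G h g)) h (lam x)
         = lam (act h x)"
    using proper unfolding properly_amenable_def by blast
  have unit_space: "G_space G (unit_space G) (\<lambda>u. u) (unit_action G)"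
    using assms(3) unfolding G_amenable_def G_map_def by simp
  obtain m :: "nat \<Rightarrow> 'g \<Rightarrow> 'x measure" where m:
    "\<And>n. pi_sys X (unit_space G) rX (m n)" "\<And>n u. u \<in> space (unit_space G) \<Longrightarrow> prob_space (m n u)"
    "\<And>g u. g \<in> space (arrows G) \<Longrightarrow> u \<in> space (unit_space G) \<Longrightarrow> src G g = u \<Longrightarrow>
       (\<lambda>n. tv_norm (gact_measure G X rX act g (m n u)) (m n (unit_action G g u))) \<longlonglongrightarrow> 0"
    using assms(3) unfolding G_amenable_def by blast
  interpret proper_amenable_systems G X rX act lam m
    by (rule proper_amenable_systems.intro; fact assms(1) X unit_space fib_prod lam m)
  show ?thesis
    by (rule borel_amenable)
qed

end
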